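(* Let $E$ be a real affine space of dimension $n$ with a system of coordinates $\mathcal L=(\ell_1,\dots,\ell_n)$. Every $\mu\in\mathcal M^*(E)$ has at most one center with respect to $\mathcal L$. Moreover, for $1\le k\le n$, the first $k$ coordinates of the center depend only on the restriction of $\mu$ to $\mathcal B_E(\ell_1,\dots,\ell_k)$: if $\mu,\nu\in\mathcal M^*(E)$ satisfy $\mu(A)=\nu(A)$ for all $A\in\mathcal B_E(\ell_1,\dots,\ell_k)$, and $x$, $y$ are centers with respect to $\mathcal L$ of $\mu$ and $\nu$ respectively, then $(x_1,\dots,x_k)=(y_1,\dots,y_k)$.
   Context: $\vec E$ is the vector space of $E$. A partition of $E$ is a collection of subsets covering $E$ whose distinct members have disjoint interiors. Yao-Yao partitions and their centers are defined by induction on dimension: if $E=\{x\}$, the Yao-Yao partition is $\{\{x\}\}$, with center $x$; if $\dim E=n\ge1$, $\mathcal P$ is a Yao-Yao partition of $E$ with center $x$ if there exist an affine hyperplane $F$, a vector $v\in\vec E\setminus\vec F$ and two Yao-Yao partitions $\mathcal P_1,\mathcal P_{-1}$ of $F$ with the same center $x$ such that $\mathcal P=\{A+\mathbb R_-v: A\in\mathcal P_{-1}\}\cup\{A+\mathbb R_+v: A\in\mathcal P_1\}$. A system of coordinates is a family $(\ell_1,\dots,\ell_n)$ of affine forms such that $x\mapsto(\ell_i(x))_i$ is a bijection $E\to\mathbb R^n$; write $x_i=\ell_i(x)$. Such a partition, given by $F,v,x,\mathcal P_1,\mathcal P_{-1}$, is adapted to $(\ell_1,\dots,\ell_n)$ if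 $F=\{z: z_1=x_1\}$ and $\mathcal P_1,\mathcal P_{-1}$ are adapted to $(\ell_2|_F,\dots,\ell_n|_F)$ (in dimension $0$ every Yao-Yao partition is adapted). $\mathcal M(E)$ is the set of finite non-negative Borel measures on $E$ vanishing on every affine hyperplane; $\mathcal M^*(E)$ is the set of $\mu\in\mathcal M(E)$ with $\mu(U)>0$ for every nonempty open set $U$. A Yao-Yao equipartition for $\mu$ is a Yao-Yao partition $\mathcal P$ with $\mu(A)=2^{-n}\mu(E)$ for all $A\in\mathcal P$. A center of $\mu$ with respect to $\mathcal L$ is the center of a Yao-Yao equipartition for $\mu$ adapted to $\mathcal L$. $\mathcal B_E(\ell_1,\dots,\ell_k)$ is the smallest $\sigma$-algebra of subsets of $E$ making $\ell_1,\dots,\ell_k$ measurable. *)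

theory Defs
  imports "HOL-Analysis.Analysis"
begin

text \<open>The ambient real affine space E is modelled as a Euclidean-space type 'a
  (any finite-dimensional real affine space is isomorphic to one); dim E = DIM('a).\<close>

definition affine_form :: "('a::euclidean_space \<Rightarrow> real) \<Rightarrow> bool" where
  "affine_form l \<longleftrightarrow> (\<exists>f c. linear f \<and> l = (\<lambda>z. f z + c))"

definition coord_system :: "('a::euclidean_space \<Rightarrow> real) list \<Rightarrow> bool" where
  "coord_system L \<longleftrightarrow> length L = DIM('a) \<and> (\<forall>l\<in>set L. affine_form l) \<and>
     bij_betw (\<lambda>z. map (\<lambda>l. l z) L) UNIV {xs. length xs = DIM('a)}"

definition ray_plus :: "'a::real_vector set \<Rightarrow> 'a \<Rightarrow> 'a set" where
  "ray_plus A v = {a + t *\<^sub>R v | a t. a \<in> A \<and> t \<ge> 0}"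

definition ray_minus :: "'a::real_vector set \<Rightarrow> 'a \<Rightarrow> 'a set" where
  "ray_minus A v = {a + t *\<^sub>R v | a t. a \<in> A \<and> t \<le> 0}"

text \<open>At each step the hyperplane is
  F = {z \<in> S. l_1 z = l_1 x}, v is a vector of the direction of S not in the direction
  of F (i.e. x + v \<in> S and l_1 (x + v) \<noteq> l_1 x), and the two sub-partitions of F
  are adapted to the restrictions of (l_2,...,l_n) to F.\<close>
inductive yy_adapted :: "'a::euclidean_space set \<Rightarrow> ('a \<Rightarrow> real) list \<Rightarrow> 'a set set \<Rightarrow> 'a \<Rightarrow> bool"
where
  base: "yy_adapted {x} [] {{x}} x"
| step: "\<lbrakk> F = {z \<in> S. l z = l x}; x + v \<in> S; l (x + v) \<noteq> l x;
           yy_adapted F L P1 x; yy_adapted F L Pm1 x;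
           P = {ray_minus A v | A. A \<in> Pm1} \<union> {ray_plus A v | A. A \<in> P1} \<rbrakk>
         \<Longrightarrow> yy_adapted S (l # L) P x"

definition meas_M :: "'a::euclidean_space measure set" where
  "meas_M = {\<mu>. sets \<mu> = sets borel \<and> finite_measure \<mu> \<and>
      (\<forall>a b. a \<noteq> 0 \<longrightarrow> emeasure \<mu> {z. a \<bullet> z = b} = 0)}"

definition meas_Mstar :: "'a::euclidean_space measure set" where
  "meas_Mstar = {\<mu>\<in>meas_M. \<forall>U. open U \<and> U \<noteq> {} \<longrightarrow> emeasure \<mu> U > 0}"

definition yy_equipartition :: "'a::euclidean_space measure \<Rightarrow> 'a set set \<Rightarrow> bool" where
  "yy_equipartition \<mu> P \<longleftrightarrow>
     (\<forall>A\<in>P. emeasure \<mu> A = emeasure \<mu> UNIV / 2 ^ DIM('a))"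

definition yy_center :: "'a::euclidean_space measure \<Rightarrow> ('a \<Rightarrow> real) list \<Rightarrow> 'a \<Rightarrow> bool" where
  "yy_center \<mu> L x \<longleftrightarrow> (\<exists>P. yy_adapted UNIV L P x \<and> yy_equipartition \<mu> P)"

definition coord_sigma :: "('a \<Rightarrow> real) list \<Rightarrow> nat \<Rightarrow> 'a set set" where
  "coord_sigma L k = sigma_sets UNIV {(L ! i) -` B | i B. i < k \<and> B \<in> sets borel}"

end

theory Submission
  imports Defs
begin

text \<open>Unwinding the inductive definition, a Yao-Yao partition with center x adapted to
  (l_1, ..., l_n) is described by a binary tree of vectors v_s, one for each sign word s of
  length m < n, such that the linear parts of l_1, ..., l_m vanish on v_s and that of l_(m+1)
  does not.  The piece of a word s consists of the points z for which peeling z - x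
  successively along the vectors of the prefixes of s gives coefficients of the signs
  prescribed by s.  The union of the pieces sharing a prefix of length m is a cone of measure
  mu(E)/2^m which only depends on l_1, ..., l_m.

  Let centers x of mu and y of nu first differ in a coordinate j < k.  Descending through both
  trees simultaneously, one keeps the cones of x and y equal while the difference of the peeled
  points stays on one side of the first form not vanishing on it.  At depth d <= j + 1 this
  produces a cone of x inside a cone of y with a nonempty open set in between.  Since mu and nu
  agree on the cone of y, both cones have mu-measure mu(E)/2^d, contradicting that mu charges
  open sets.\<close>

section \<open>Affine forms\<close>

definition linear_part :: "('a::real_vector \<Rightarrow> real) \<Rightarrow> 'a \<Rightarrow> real" where
  "linear_part l = (\<lambda>z. l z - l 0)"

lemma
  assumes "affine_form l"
  shows linear_linear_part: "linear (linear_part l)"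
    and affine_form_add: "l (a + b) = l a + linear_part l b"
    and affine_form_diff: "l a - l b = linear_part l (a - b)"
proof -
  obtain f c where f: "linear f" "l = (\<lambda>z. f z + c)"
    using assms unfolding affine_form_def by blast
  then have "linear_part l = f" by (auto simp: linear_part_def linear_0)
  then show "linear (linear_part l)" "l (a + b) = l a + linear_part l b"
    "l a - l b = linear_part l (a - b)"
    using f by (simp_all add: linear_add linear_diff)
qed

lemma linear_functional_eq_inner:
  fixes \<phi> :: "'a::euclidean_space \<Rightarrow> real"
  assumes "linear \<phi>"
  shows "\<phi> z = (\<Sum>b\<in>Basis. \<phi> b *\<^sub>R b) \<bullet> z"
proof -
  have "\<phi> z = \<phi> (\<Sum>b\<in>Basis. (z \<bullet> b) *\<^sub>R b)" by (simp add: euclidean_representation)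
  also have "\<dots> = (\<Sum>b\<in>Basis. (z \<bullet> b) * \<phi> b)" using assms by (simp add: linear_sum linear_scale)
  also have "\<dots> = (\<Sum>b\<in>Basis. \<phi> b *\<^sub>R b) \<bullet> z" by (simp add: inner_sum_right inner_commute mult.commute)
  finally show ?thesis .
qed

section \<open>Peeling along a frame\<close>

definition on_side :: "bool \<Rightarrow> real \<Rightarrow> bool" where
  "on_side b t \<longleftrightarrow> (if b then 0 \<le> t else t \<le> 0)"

definition strictly_on_side :: "bool \<Rightarrow> real \<Rightarrow> bool" where
  "strictly_on_side b t \<longleftrightarrow> (if b then 0 < t else t < 0)"

lemma strictly_on_side_imp_on_side: "strictly_on_side b t \<Longrightarrow> on_side b t"
  unfolding on_side_def strictly_on_side_def by (auto split: if_splits)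

lemma on_side_divide: "a \<noteq> 0 \<Longrightarrow> on_side (e \<longleftrightarrow> 0 < a) (t / a) \<longleftrightarrow> on_side e t"
  unfolding on_side_def by (cases e; cases "0 < a") (auto simp: zero_le_divide_iff divide_le_0_iff)

lemma strictly_on_side_divide: "a \<noteq> 0 \<Longrightarrow> strictly_on_side (e \<longleftrightarrow> 0 < a) (t / a) \<longleftrightarrow> strictly_on_side e t"
  unfolding strictly_on_side_def by (cases e; cases "0 < a") (auto simp: zero_less_divide_iff divide_less_0_iff)

text \<open>A frame assigns a vector to every node (sign word) of a binary tree.  Along a sign word
  \<open>\<sigma>\<close>, a vector \<open>h\<close> is peeled: at depth \<open>i\<close> the component along the frame vector of
  \<open>take i \<sigma>\<close>, measured by the form \<open>fs ! i\<close>, is recorded as a coefficient and removed.\<close>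

primrec peel_residual :: "('a::real_vector \<Rightarrow> real) list \<Rightarrow> (bool list \<Rightarrow> 'a) \<Rightarrow> bool list \<Rightarrow> nat \<Rightarrow> 'a \<Rightarrow> 'a" where
  "peel_residual fs vt \<sigma> 0 h = h"
| "peel_residual fs vt \<sigma> (Suc i) h = peel_residual fs vt \<sigma> i h -
     ((fs!i) (peel_residual fs vt \<sigma> i h) / (fs!i) (vt (take i \<sigma>))) *\<^sub>R vt (take i \<sigma>)"

definition peel_coeff :: "('a::real_vector \<Rightarrow> real) list \<Rightarrow> (bool list \<Rightarrow> 'a) \<Rightarrow> bool list \<Rightarrow> nat \<Rightarrow> 'a \<Rightarrow> real" where
  "peel_coeff fs vt \<sigma> i h = (fs!i) (peel_residual fs vt \<sigma> i h) / (fs!i) (vt (take i \<sigma>))"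

lemma peel_residual_Suc: "peel_residual fs vt \<sigma> (Suc i) h = peel_residual fs vt \<sigma> i h - peel_coeff fs vt \<sigma> i h *\<^sub>R vt (take i \<sigma>)"
  by (simp add: peel_coeff_def)

lemma peel_residual_eq_sum: "peel_residual fs vt \<sigma> i h = h - (\<Sum>j<i. peel_coeff fs vt \<sigma> j h *\<^sub>R vt (take j \<sigma>))"
  by (induction i) (simp_all add: peel_residual_Suc del: peel_residual.simps(2))

lemma peel_residual_cong_take: "take i \<sigma> = take i \<sigma>' \<Longrightarrow> peel_residual fs vt \<sigma> i h = peel_residual fs vt \<sigma>' i h"
proof (induction i)
  case (Suc i)
  then have "take i \<sigma> = take i \<sigma>'" by (metis take_take min_absorb1 le_SucI order_refl)
  then show ?case using Suc by simp
qed simp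

lemma peel_coeff_cong_take: "take i \<sigma> = take i \<sigma>' \<Longrightarrow> peel_coeff fs vt \<sigma> i h = peel_coeff fs vt \<sigma>' i h"
  unfolding peel_coeff_def using peel_residual_cong_take by metis

lemma peel_residual_snoc: "i \<le> length \<sigma> \<Longrightarrow> peel_residual fs vt (\<sigma>@[b]) i h = peel_residual fs vt \<sigma> i h"
  by (rule peel_residual_cong_take) simp

lemma peel_coeff_snoc: "i \<le> length \<sigma> \<Longrightarrow> peel_coeff fs vt (\<sigma>@[b]) i h = peel_coeff fs vt \<sigma> i h"
  by (rule peel_coeff_cong_take) simp

lemma linear_peel_residual:
  assumes "\<forall>f\<in>set fs. linear f" "i \<le> length fs"
  shows "linear (peel_residual fs vt \<sigma> i)"
  using assms(2)
proof (induction i)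
  case 0
  show ?case by (simp add: linear_id[unfolded id_def])
next
  case (Suc i)
  have IH: "linear (peel_residual fs vt \<sigma> i)" and f: "linear (fs!i)" using Suc assms(1) by simp_all
  show ?case
    by (rule linearI) (use linear_add[OF IH] linear_add[OF f] linear_scale[OF IH] linear_scale[OF f] in
      \<open>simp_all add: add_divide_distrib scaleR_add_left scaleR_diff_right\<close>)
qed

lemma linear_peel_coeff:
  assumes "\<forall>f\<in>set fs. linear f" "i < length fs"
  shows "linear (peel_coeff fs vt \<sigma> i)"
proof -
  have r: "linear (peel_residual fs vt \<sigma> i)" and f: "linear (fs!i)"
    using assms by (auto intro: linear_peel_residual)
  show ?thesis
    by (rule linearI) (use linear_add[OF r] linear_add[OF f] linear_scale[OF r] linear_scale[OF f] in
      \<open>simp_all add: peel_coeff_def add_divide_distrib\<close>)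
qed

lemma peel_residual_kernel:
  assumes "\<forall>j<m. (fs!j) h = 0" "i \<le> m"
  shows "peel_residual fs vt \<sigma> i h = h"
  using assms(2) by (induction i) (use assms(1) in auto)

lemma peel_coeff_kernel:
  assumes "\<forall>j<m. (fs!j) h = 0" "i < m"
  shows "peel_coeff fs vt \<sigma> i h = 0"
  using peel_residual_kernel[OF assms(1), of i] assms by (simp add: peel_coeff_def)

lemma peel_residual_add_kernel:
  assumes "\<forall>f\<in>set fs. linear f" "m \<le> length fs" "\<forall>j<m. (fs!j) h = 0" "i \<le> m"
  shows "peel_residual fs vt \<sigma> i (a + h) = peel_residual fs vt \<sigma> i a + h"
proof -
  have "linear (peel_residual fs vt \<sigma> i)" using assms by (intro linear_peel_residual) auto
  then show ?thesis using peel_residual_kernel[OF assms(3,4)] by (simp add: linear_add)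
qed

lemma peel_coeff_add_kernel:
  assumes "\<forall>f\<in>set fs. linear f" "m \<le> length fs" "\<forall>j<m. (fs!j) h = 0" "i < m"
  shows "peel_coeff fs vt \<sigma> i (a + h) = peel_coeff fs vt \<sigma> i a"
proof -
  have "linear (peel_coeff fs vt \<sigma> i)" using assms by (intro linear_peel_coeff) auto
  then show ?thesis using peel_coeff_kernel[OF assms(3,4)] by (simp add: linear_add)
qed

lemma peel_coeff_eq_recursive:
  assumes "linear (fs!i)"
  shows "peel_coeff fs vt \<sigma> i h =
    ((fs!i) h - (\<Sum>j<i. peel_coeff fs vt \<sigma> j h * (fs!i) (vt (take j \<sigma>)))) / (fs!i) (vt (take i \<sigma>))"
proof -
  have "(fs!i) (peel_residual fs vt \<sigma> i h) = (fs!i) h - (\<Sum>j<i. peel_coeff fs vt \<sigma> j h * (fs!i) (vt (take j \<sigma>)))"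
    by (subst peel_residual_eq_sum) (use assms in \<open>simp add: linear_diff linear_sum linear_scale\<close>)
  then show ?thesis by (simp only: peel_coeff_def)
qed

text \<open>The cone of \<open>\<sigma>\<close> with apex \<open>x\<close> is where every coefficient of \<open>z - x\<close> has the sign prescribed
  by \<open>\<sigma>\<close>.  Its points are those of the Yao-Yao piece with sign word \<open>\<sigma>\<close>: the coefficient at depth
  \<open>i\<close> is the parameter \<open>t\<close> of the ray \<open>a + t v\<close> at the \<open>i\<close>-th step of the inductive construction.\<close>

definition yy_cone :: "('a::real_vector \<Rightarrow> real) list \<Rightarrow> (bool list \<Rightarrow> 'a) \<Rightarrow> 'a \<Rightarrow> bool list \<Rightarrow> 'a set" where
  "yy_cone fs vt x \<sigma> = {z. \<forall>i<length \<sigma>. on_side (\<sigma>!i) (peel_coeff fs vt \<sigma> i (z - x))}"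

definition yy_open_cone :: "('a::real_vector \<Rightarrow> real) list \<Rightarrow> (bool list \<Rightarrow> 'a) \<Rightarrow> 'a \<Rightarrow> bool list \<Rightarrow> 'a set" where
  "yy_open_cone fs vt x \<sigma> = {z. \<forall>i<length \<sigma>. strictly_on_side (\<sigma>!i) (peel_coeff fs vt \<sigma> i (z - x))}"

lemma yy_cone_Nil [simp]: "yy_cone fs vt x [] = UNIV" and yy_open_cone_Nil [simp]: "yy_open_cone fs vt x [] = UNIV"
  by (simp_all add: yy_cone_def yy_open_cone_def)

lemma yy_cone_snoc:
  "yy_cone fs vt x (\<sigma>@[b]) = yy_cone fs vt x \<sigma> \<inter> {z. on_side b (peel_coeff fs vt \<sigma> (length \<sigma>) (z - x))}"
  unfolding yy_cone_def by (auto simp: peel_coeff_snoc nth_append less_Suc_eq)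

lemma yy_open_cone_snoc:
  "yy_open_cone fs vt x (\<sigma>@[b]) = yy_open_cone fs vt x \<sigma> \<inter> {z. strictly_on_side b (peel_coeff fs vt \<sigma> (length \<sigma>) (z - x))}"
  unfolding yy_open_cone_def by (auto simp: peel_coeff_snoc nth_append less_Suc_eq)

lemma yy_open_cone_subset: "yy_open_cone fs vt x \<sigma> \<subseteq> yy_cone fs vt x \<sigma>"
  unfolding yy_cone_def yy_open_cone_def using strictly_on_side_imp_on_side by blast

lemma yy_open_cone_add_kernel:
  assumes "\<forall>f\<in>set fs. linear f" "length \<sigma> \<le> length fs" "\<forall>j<length \<sigma>. (fs!j) h = 0"
  shows "z + h \<in> yy_open_cone fs vt x \<sigma> \<longleftrightarrow> z \<in> yy_open_cone fs vt x \<sigma>"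
proof -
  have "peel_coeff fs vt \<sigma> i (z + h - x) = peel_coeff fs vt \<sigma> i (z - x)" if "i < length \<sigma>" for i
    using peel_coeff_add_kernel[OF assms, where a = "z - x"] that by (simp add: algebra_simps)
  then show ?thesis unfolding yy_open_cone_def by auto
qed

lemma continuous_peel_coeff:
  fixes fs :: "('a::euclidean_space \<Rightarrow> real) list"
  assumes "\<forall>f\<in>set fs. linear f" "i < length fs"
  shows "continuous_on UNIV (\<lambda>z. peel_coeff fs vt \<sigma> i (z - x))"
proof -
  have l: "linear (peel_coeff fs vt \<sigma> i)" using assms by (rule linear_peel_coeff)
  then have "continuous_on UNIV (peel_coeff fs vt \<sigma> i)"
    by (simp add: linear_conv_bounded_linear linear_continuous_on)
  then have "continuous_on UNIV (\<lambda>z. peel_coeff fs vt \<sigma> i z - peel_coeff fs vt \<sigma> i x)"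
    by (intro continuous_intros)
  then show ?thesis using l by (simp add: linear_diff)
qed

lemma closed_yy_cone:
  fixes fs :: "('a::euclidean_space \<Rightarrow> real) list"
  assumes "\<forall>f\<in>set fs. linear f" "length \<sigma> \<le> length fs"
  shows "closed (yy_cone fs vt x \<sigma>)"
proof -
  have "closed {z. on_side (\<sigma>!i) (peel_coeff fs vt \<sigma> i (z - x))}" if "i < length \<sigma>" for i
  proof -
    have c: "continuous_on UNIV (\<lambda>z. peel_coeff fs vt \<sigma> i (z - x))"
      using assms that by (intro continuous_peel_coeff) auto
    show ?thesis
      using closed_Collect_le[OF continuous_on_const c, of 0] closed_Collect_le[OF c continuous_on_const, of 0]
      by (cases "\<sigma>!i") (simp_all add: on_side_def)
  qed
  then have "closed (\<Inter>i<length \<sigma>. {z. on_side (\<sigma>!i) (peel_coeff fs vt \<sigma> i (z - x))})" by auto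
  moreover have "yy_cone fs vt x \<sigma> = (\<Inter>i<length \<sigma>. {z. on_side (\<sigma>!i) (peel_coeff fs vt \<sigma> i (z - x))})"
    unfolding yy_cone_def by auto
  ultimately show ?thesis by simp
qed

lemma open_yy_open_cone:
  fixes fs :: "('a::euclidean_space \<Rightarrow> real) list"
  assumes "\<forall>f\<in>set fs. linear f" "length \<sigma> \<le> length fs"
  shows "open (yy_open_cone fs vt x \<sigma>)"
proof -
  have "open {z. strictly_on_side (\<sigma>!i) (peel_coeff fs vt \<sigma> i (z - x))}" if "i < length \<sigma>" for i
  proof -
    have c: "continuous_on UNIV (\<lambda>z. peel_coeff fs vt \<sigma> i (z - x))"
      using assms that by (intro continuous_peel_coeff) auto
    show ?thesis
      using open_Collect_less[OF continuous_on_const c, of 0] open_Collect_less[OF c continuous_on_const, of 0]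
      by (cases "\<sigma>!i") (simp_all add: strictly_on_side_def)
  qed
  then have "open (\<Inter>i<length \<sigma>. {z. strictly_on_side (\<sigma>!i) (peel_coeff fs vt \<sigma> i (z - x))})" by auto
  moreover have "yy_open_cone fs vt x \<sigma> = (\<Inter>i<length \<sigma>. {z. strictly_on_side (\<sigma>!i) (peel_coeff fs vt \<sigma> i (z - x))})"
    unfolding yy_open_cone_def by auto
  ultimately show ?thesis by simp
qed

section \<open>Yao-Yao partitions as cone decompositions\<close>

definition triangular_frame :: "('a::real_vector \<Rightarrow> real) list \<Rightarrow> (bool list \<Rightarrow> 'a) \<Rightarrow> bool" where
  "triangular_frame fs vt \<longleftrightarrow> (\<forall>\<sigma>. length \<sigma> < length fs \<longrightarrow>
     (\<forall>i<length \<sigma>. (fs!i) (vt \<sigma>) = 0) \<and> (fs!length \<sigma>) (vt \<sigma>) \<noteq> 0)"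

definition frame_node :: "'a \<Rightarrow> (bool list \<Rightarrow> 'a) \<Rightarrow> (bool list \<Rightarrow> 'a) \<Rightarrow> bool list \<Rightarrow> 'a" where
  "frame_node v vt1 vtm1 \<sigma> = (case \<sigma> of [] \<Rightarrow> v | b#\<sigma>' \<Rightarrow> (if b then vt1 \<sigma>' else vtm1 \<sigma>'))"

lemma peel_residual_frame_node:
  "peel_residual (f#fs) (frame_node v vt1 vtm1) (b#\<sigma>) (Suc i) h
   = peel_residual fs (if b then vt1 else vtm1) \<sigma> i (h - (f h / f v) *\<^sub>R v)"
  by (induction i) (simp_all add: frame_node_def)

lemma peel_coeff_frame_node:
  "peel_coeff (f#fs) (frame_node v vt1 vtm1) (b#\<sigma>) 0 h = f h / f v"
  "peel_coeff (f#fs) (frame_node v vt1 vtm1) (b#\<sigma>) (Suc i) h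
   = peel_coeff fs (if b then vt1 else vtm1) \<sigma> i (h - (f h / f v) *\<^sub>R v)"
  unfolding peel_coeff_def using peel_residual_frame_node[of f fs v vt1 vtm1 b \<sigma> i h]
  by (simp_all add: frame_node_def)

lemma ray_minus_eq_ray_plus: "ray_minus A v = ray_plus A (- v)"
proof -
  have "(\<exists>t\<le>0. z = a + t *\<^sub>R v) \<longleftrightarrow> (\<exists>t\<ge>0. z = a + t *\<^sub>R (- v))" for z a
  proof
    assume "\<exists>t\<le>0. z = a + t *\<^sub>R v"
    then obtain t where "t \<le> 0" "z = a + t *\<^sub>R v" by blast
    then show "\<exists>t\<ge>0. z = a + t *\<^sub>R (- v)" by (intro exI[of _ "- t"]) simp
  next
    assume "\<exists>t\<ge>0. z = a + t *\<^sub>R (- v)"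
    then obtain t where "t \<ge> 0" "z = a + t *\<^sub>R (- v)" by blast
    then show "\<exists>t\<le>0. z = a + t *\<^sub>R v" by (intro exI[of _ "- t"]) simp
  qed
  then show ?thesis unfolding ray_minus_def ray_plus_def by blast
qed

text \<open>A point \<open>a + t v\<close> swept out from \<open>F\<close> determines its ray parameter as
  \<open>t = l (z - x) / l v\<close>, because \<open>l\<close> is constant on \<open>F\<close>.\<close>

lemma ray_plus_level_set:
  assumes l: "affine_form l" "linear_part l v \<noteq> 0"
    and S: "\<And>a t. a + t *\<^sub>R v \<in> S \<longleftrightarrow> a \<in> S" and F: "F = {z\<in>S. l z = l x}"
  shows "ray_plus {a\<in>F. Q a} v =
    {z\<in>S. 0 \<le> linear_part l (z - x) / linear_part l v \<and>
       Q (z - (linear_part l (z - x) / linear_part l v) *\<^sub>R v)}"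
    (is "_ = {z\<in>S. 0 \<le> ?t z \<and> _}")
proof -
  have param: "?t (a + t *\<^sub>R v) = t" if "l a = l x" for a t
  proof -
    have "linear_part l (a + t *\<^sub>R v - x) = linear_part l ((a - x) + t *\<^sub>R v)"
      by (simp add: algebra_simps)
    also have "\<dots> = linear_part l (a - x) + t * linear_part l v"
      using linear_linear_part[OF l(1)] by (simp add: linear_add linear_scale)
    finally have "linear_part l (a + t *\<^sub>R v - x) = linear_part l (a - x) + t * linear_part l v" .
    moreover have "linear_part l (a - x) = 0" using affine_form_diff[OF l(1), of a x] that by simp
    ultimately show ?thesis using l(2) by simp
  qed
  have foot: "l (z - ?t z *\<^sub>R v) = l x" for z
    using affine_form_add[OF l(1), of z "- (?t z *\<^sub>R v)"] affine_form_diff[OF l(1), of z x]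
      linear_linear_part[OF l(1)] l(2)
    by (simp add: linear_scale linear_neg)
  show ?thesis
  proof (intro set_eqI iffI)
    fix z assume "z \<in> ray_plus {a\<in>F. Q a} v"
    then obtain a t where "z = a + t *\<^sub>R v" "a \<in> F" "Q a" "t \<ge> 0"
      unfolding ray_plus_def by auto
    then show "z \<in> {z\<in>S. 0 \<le> ?t z \<and> Q (z - ?t z *\<^sub>R v)}"
      using param S F by auto
  next
    fix z assume z: "z \<in> {z\<in>S. 0 \<le> ?t z \<and> Q (z - ?t z *\<^sub>R v)}"
    have "z - ?t z *\<^sub>R v \<in> F" using z S[of "z - ?t z *\<^sub>R v" "?t z"] foot F by auto
    then show "z \<in> ray_plus {a\<in>F. Q a} v" using z unfolding ray_plus_def
      by (intro CollectI exI[of _ "z - ?t z *\<^sub>R v"] exI[of _ "?t z"]) auto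
  qed
qed

lemma ray_minus_level_set:
  assumes l: "affine_form l" "linear_part l v \<noteq> 0"
    and S: "\<And>a t. a + t *\<^sub>R v \<in> S \<longleftrightarrow> a \<in> S" and F: "F = {z\<in>S. l z = l x}"
  shows "ray_minus {a\<in>F. Q a} v =
    {z\<in>S. linear_part l (z - x) / linear_part l v \<le> 0 \<and>
       Q (z - (linear_part l (z - x) / linear_part l v) *\<^sub>R v)}"
proof -
  have neg: "linear_part l (- v) = - linear_part l v"
    using linear_linear_part[OF l(1)] by (rule linear_neg)
  have "a + t *\<^sub>R (- v) \<in> S \<longleftrightarrow> a \<in> S" for a t using S[of a "- t"] by simp
  from ray_plus_level_set[OF l(1) _ this F, of Q] l(2) neg show ?thesis
    unfolding ray_minus_eq_ray_plus by simp
qed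

text \<open>The frame vectors of an adapted Yao-Yao partition are the vectors \<open>v\<close> of the
  successive steps; they lie in the direction of the affine subspace \<open>S\<close> cut out by the forms
  \<open>L0\<close> already used, which is how the induction is generalised.\<close>

lemma yy_adapted_imp_yy_cones:
  assumes "yy_adapted S L P x" "S = {z. \<forall>l\<in>set L0. l z = l x}" "\<forall>l\<in>set (L0 @ L). affine_form l"
  shows "\<exists>vt. P = (\<lambda>\<sigma>. S \<inter> yy_cone (map linear_part L) vt x \<sigma>) ` {\<sigma>. length \<sigma> = length L} \<and>
     (\<forall>\<sigma>. length \<sigma> < length L \<longrightarrow> (\<forall>l\<in>set L0. linear_part l (vt \<sigma>) = 0)) \<and>
     triangular_frame (map linear_part L) vt"
  using assms
proof (induction arbitrary: L0 rule: yy_adapted.induct)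
  case (base x)
  have "{\<sigma>::bool list. length \<sigma> = 0} = {[]}" by auto
  then show ?case by (auto simp: triangular_frame_def)
next
  case (step F S l x v L P1 Pm1 P)
  let ?fs = "map linear_part L"
  have F: "F = {z. \<forall>l'\<in>set (L0 @ [l]). l' z = l' x}" using step.hyps(1) step.prems(1) by auto
  have aff: "\<forall>l'\<in>set ((L0 @ [l]) @ L). affine_form l'" using step.prems(2) by auto
  obtain vt1 where vt1: "P1 = (\<lambda>\<sigma>. F \<inter> yy_cone ?fs vt1 x \<sigma>) ` {\<sigma>. length \<sigma> = length L}"
    "\<forall>\<sigma>. length \<sigma> < length L \<longrightarrow> (\<forall>l'\<in>set (L0 @ [l]). linear_part l' (vt1 \<sigma>) = 0)"
    "triangular_frame ?fs vt1"
    using step.IH(1)[OF F aff] by blast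
  obtain vtm1 where vtm1: "Pm1 = (\<lambda>\<sigma>. F \<inter> yy_cone ?fs vtm1 x \<sigma>) ` {\<sigma>. length \<sigma> = length L}"
    "\<forall>\<sigma>. length \<sigma> < length L \<longrightarrow> (\<forall>l'\<in>set (L0 @ [l]). linear_part l' (vtm1 \<sigma>) = 0)"
    "triangular_frame ?fs vtm1"
    using step.IH(2)[OF F aff] by blast
  define vt where "vt = frame_node v vt1 vtm1"
  have al: "affine_form l" using step.prems(2) by simp
  have v0: "linear_part l' v = 0" if "l' \<in> set L0" for l'
    using step.hyps(2) step.prems that affine_form_add[of l' x v] by auto
  have vl: "linear_part l v \<noteq> 0" using step.hyps(3) affine_form_add[OF al, of x v] by simp
  have S: "a + t *\<^sub>R v \<in> S \<longleftrightarrow> a \<in> S" for a t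
  proof -
    have "l' (a + t *\<^sub>R v) = l' a" if "l' \<in> set L0" for l'
      using affine_form_add[of l' a "t *\<^sub>R v"] linear_linear_part[of l'] step.prems(2) v0 that
      by (simp add: linear_scale)
    then show ?thesis using step.prems(1) by auto (metis, metis)
  qed
  have cone_Cons: "yy_cone (map linear_part (l#L)) vt x (b#\<sigma>) =
      {z. on_side b (linear_part l (z - x) / linear_part l v) \<and>
        z - (linear_part l (z - x) / linear_part l v) *\<^sub>R v \<in> yy_cone ?fs (if b then vt1 else vtm1) x \<sigma>}"
    for b \<sigma>
    unfolding yy_cone_def vt_def by (simp add: All_less_Suc2 peel_coeff_frame_node algebra_simps)
  have slice: "S \<inter> yy_cone (map linear_part (l#L)) vt x (b#\<sigma>) =
     (if b then ray_plus else ray_minus) (F \<inter> yy_cone ?fs (if b then vt1 else vtm1) x \<sigma>) v" for b \<sigma>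
  proof -
    have "F \<inter> yy_cone ?fs (if b then vt1 else vtm1) x \<sigma> =
        {a\<in>F. a \<in> yy_cone ?fs (if b then vt1 else vtm1) x \<sigma>}" by auto
    then show ?thesis
      using ray_plus_level_set[OF al vl S step.hyps(1)] ray_minus_level_set[OF al vl S step.hyps(1)]
      unfolding cone_Cons by (cases b) (auto simp: on_side_def)
  qed
  have words: "{\<sigma>. length \<sigma> = length (l#L)} =
      (\<lambda>\<sigma>. False#\<sigma>) ` {\<sigma>. length \<sigma> = length L} \<union> (\<lambda>\<sigma>. True#\<sigma>) ` {\<sigma>. length \<sigma> = length L}"
    by (auto simp: length_Suc_conv)
  have "P = (\<lambda>\<sigma>. S \<inter> yy_cone (map linear_part (l#L)) vt x \<sigma>) ` {\<sigma>. length \<sigma> = length (l#L)}"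
    unfolding words image_Un image_image step.hyps(6) slice vt1(1) vtm1(1) by auto
  moreover have "\<forall>\<sigma>. length \<sigma> < length (l#L) \<longrightarrow> (\<forall>l'\<in>set L0. linear_part l' (vt \<sigma>) = 0)"
    using v0 vt1(2) vtm1(2) by (auto simp: vt_def frame_node_def split: list.split)
  moreover have "triangular_frame (map linear_part (l#L)) vt"
    unfolding triangular_frame_def
  proof (intro allI impI)
    fix \<sigma> :: "bool list" assume len: "length \<sigma> < length (map linear_part (l#L))"
    show "(\<forall>i<length \<sigma>. (map linear_part (l#L) ! i) (vt \<sigma>) = 0) \<and>
      (map linear_part (l#L) ! length \<sigma>) (vt \<sigma>) \<noteq> 0"
    proof (cases \<sigma>)
      case Nil then show ?thesis using vl by (simp add: vt_def frame_node_def)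
    next
      case (Cons b \<sigma>')
      then show ?thesis using vt1(2,3) vtm1(2,3) len
        by (cases b) (auto simp: vt_def frame_node_def triangular_frame_def All_less_Suc2)
    qed
  qed
  ultimately show ?case by blast
qed

section \<open>Measure of the cones\<close>

lemma borel_measurable_peel_coeff:
  assumes lin: "\<forall>f\<in>set fs. linear f" and m: "i < m" "m \<le> length fs"
    and meas: "\<forall>j<m. fs!j \<in> borel_measurable M"
  shows "(\<lambda>z. peel_coeff fs vt \<sigma> i (z - y)) \<in> borel_measurable M"
proof -
  have "peel_coeff fs vt \<sigma> i \<in> borel_measurable M" using m(1)
  proof (induction i rule: less_induct)
    case (less i)
    have "linear (fs!i)" using lin less.prems m by simp
    moreover have "(\<lambda>h. (fs!i) h - (\<Sum>j<i. peel_coeff fs vt \<sigma> j h * (fs!i) (vt (take j \<sigma>))))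
        \<in> borel_measurable M"
      using meas less by (intro borel_measurable_diff borel_measurable_sum borel_measurable_times) auto
    ultimately show ?case by (simp add: peel_coeff_eq_recursive[where fs = fs])
  qed
  moreover have "peel_coeff fs vt \<sigma> i (z - y) = peel_coeff fs vt \<sigma> i z - peel_coeff fs vt \<sigma> i y" for z
    using linear_peel_coeff[OF lin] m by (simp add: linear_diff)
  ultimately show ?thesis by simp
qed

lemma yy_cone_in_sets:
  assumes "\<forall>f\<in>set fs. linear f" "length \<sigma> \<le> m" "m \<le> length fs"
    and "\<forall>j<m. fs!j \<in> borel_measurable M" "space M = UNIV"
  shows "yy_cone fs vt x \<sigma> \<in> sets M"
proof -
  have "{z\<in>space M. \<forall>i\<in>{..<length \<sigma>}. on_side (\<sigma>!i) (peel_coeff fs vt \<sigma> i (z - x))} \<in> sets M"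
  proof (rule sets.sets_Collect_finite_All)
    fix i assume "i \<in> {..<length \<sigma>}"
    then have c: "(\<lambda>z. peel_coeff fs vt \<sigma> i (z - x)) \<in> borel_measurable M"
      using assms by (intro borel_measurable_peel_coeff) auto
    show "{z\<in>space M. on_side (\<sigma>!i) (peel_coeff fs vt \<sigma> i (z - x))} \<in> sets M"
      using borel_measurable_le[OF borel_measurable_const c, of 0] borel_measurable_le[OF c borel_measurable_const, of 0]
      by (cases "\<sigma>!i") (simp_all add: on_side_def)
  qed simp
  moreover have "yy_cone fs vt x \<sigma> =
      {z\<in>space M. \<forall>i\<in>{..<length \<sigma>}. on_side (\<sigma>!i) (peel_coeff fs vt \<sigma> i (z - x))}"
    using assms(5) unfolding yy_cone_def by auto
  ultimately show ?thesis by simp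
qed

lemma yy_cone_in_coord_sigma:
  fixes L :: "('a::euclidean_space \<Rightarrow> real) list"
  assumes aff: "\<forall>l\<in>set L. affine_form l" and k: "length \<tau> \<le> k" "k \<le> length L"
  shows "yy_cone (map linear_part L) vt y \<tau> \<in> coord_sigma L k"
proof -
  define G where "G = {(L!i) -` B | i B. i < k \<and> B \<in> sets borel}"
  define M where "M = sigma (UNIV::'a set) G"
  have G: "G \<subseteq> Pow UNIV" by auto
  have sets_M: "sets M = coord_sigma L k"
    unfolding M_def coord_sigma_def G_def by (rule sets_measure_of) blast
  have "L!j \<in> borel_measurable M" if "j < k" for j
  proof (rule measurableI)
    fix A :: "real set" assume "A \<in> sets borel"
    then have "(L!j) -` A \<in> G" using that unfolding G_def by blast
    then show "(L!j) -` A \<inter> space M \<in> sets M"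
      unfolding M_def space_measure_of[OF G] sets_measure_of[OF G] by auto
  qed simp
  then have "\<forall>j<k. map linear_part L ! j \<in> borel_measurable M"
    using k by (auto simp: linear_part_def)
  then have "yy_cone (map linear_part L) vt y \<tau> \<in> sets M"
    using aff k linear_linear_part unfolding M_def
    by (intro yy_cone_in_sets[where m = k]) (auto simp: space_measure_of[OF G])
  then show ?thesis unfolding sets_M .
qed

lemma ennreal_halves:
  fixes r :: real
  assumes "0 \<le> r"
  shows "ennreal r / 2^Suc m + ennreal r / 2^Suc m = ennreal r / 2^m"
proof -
  have pow: "(2::ennreal)^i = ennreal (2^i)" for i
    by (metis ennreal_numeral ennreal_power zero_le_numeral)
  have "ennreal r / 2^Suc m + ennreal r / 2^Suc m = ennreal (r / 2^Suc m) + ennreal (r / 2^Suc m)"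
    unfolding pow using assms by (simp add: divide_ennreal)
  also have "\<dots> = ennreal (r / 2^m)" using assms by (simp flip: ennreal_plus)
  also have "\<dots> = ennreal r / 2^m" unfolding pow using assms by (simp add: divide_ennreal)
  finally show ?thesis .
qed

locale triangular =
  fixes fs :: "('a::euclidean_space \<Rightarrow> real) list" and vt :: "bool list \<Rightarrow> 'a"
  assumes linear_forms: "\<forall>f\<in>set fs. linear f"
    and frame: "triangular_frame fs vt"
begin

abbreviation pivot :: "bool list \<Rightarrow> real" where
  "pivot \<sigma> \<equiv> (fs ! length \<sigma>) (vt \<sigma>)"

lemma frame_vector_kernel: "length \<sigma> < length fs \<Longrightarrow> j < length \<sigma> \<Longrightarrow> (fs!j) (vt \<sigma>) = 0"
  and pivot_nonzero: "length \<sigma> < length fs \<Longrightarrow> pivot \<sigma> \<noteq> 0"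
  using frame unfolding triangular_frame_def by auto

lemma emeasure_yy_cone_split:
  assumes \<mu>: "\<mu> \<in> meas_M" and m: "length \<sigma> < length fs"
  shows "emeasure \<mu> (yy_cone fs vt x \<sigma>) =
    emeasure \<mu> (yy_cone fs vt x (\<sigma>@[True])) + emeasure \<mu> (yy_cone fs vt x (\<sigma>@[False]))"
proof -
  let ?\<phi> = "peel_coeff fs vt \<sigma> (length \<sigma>)"
  define a where "a = (\<Sum>b\<in>Basis. ?\<phi> b *\<^sub>R b)"
  have sets: "sets \<mu> = sets borel" and null: "\<And>a b. a \<noteq> 0 \<Longrightarrow> emeasure \<mu> {z. a \<bullet> z = b} = 0"
    using \<mu> unfolding meas_M_def by auto
  have meas: "yy_cone fs vt x (\<sigma>@[b]) \<in> sets \<mu>" for b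
    using closed_yy_cone[OF linear_forms, of "\<sigma>@[b]"] m sets by simp
  have lin: "linear ?\<phi>" using linear_forms m by (rule linear_peel_coeff)
  then have \<phi>: "?\<phi> z = a \<bullet> z" for z unfolding a_def by (rule linear_functional_eq_inner)
  have "?\<phi> (vt \<sigma>) = 1"
    using peel_residual_kernel[of "length \<sigma>" fs "vt \<sigma>"] frame_vector_kernel pivot_nonzero m
    by (simp add: peel_coeff_def)
  then have "a \<noteq> 0" using \<phi>[of "vt \<sigma>"] by auto
  then have "{z. a \<bullet> z = a \<bullet> x} \<in> null_sets \<mu>"
    using null sets borel_closed[OF closed_hyperplane] by (simp add: null_sets_def)
  moreover have "yy_cone fs vt x (\<sigma>@[True]) \<inter> yy_cone fs vt x (\<sigma>@[False]) \<subseteq> {z. a \<bullet> z = a \<bullet> x}"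
    using \<phi> unfolding yy_cone_snoc by (auto simp: on_side_def inner_diff_right)
  ultimately have "yy_cone fs vt x (\<sigma>@[True]) \<inter> yy_cone fs vt x (\<sigma>@[False]) \<in> null_sets \<mu>"
    using meas by (blast intro: null_sets_subset)
  moreover have "yy_cone fs vt x \<sigma> = yy_cone fs vt x (\<sigma>@[True]) \<union> yy_cone fs vt x (\<sigma>@[False])"
    unfolding yy_cone_snoc by (auto simp: on_side_def)
  ultimately show ?thesis using meas by (simp add: emeasure_Un')
qed

lemma emeasure_yy_cone:
  assumes \<mu>: "\<mu> \<in> meas_M"
    and leaves: "\<forall>\<sigma>. length \<sigma> = length fs \<longrightarrow> emeasure \<mu> (yy_cone fs vt x \<sigma>) = emeasure \<mu> UNIV / 2^length fs"
  shows "length \<sigma> \<le> length fs \<Longrightarrow> emeasure \<mu> (yy_cone fs vt x \<sigma>) = emeasure \<mu> UNIV / 2^length \<sigma>"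
proof (induction "length fs - length \<sigma>" arbitrary: \<sigma>)
  case 0
  then show ?case using leaves by simp
next
  case (Suc d)
  then have "d = length fs - length (\<sigma>@[b])" "length (\<sigma>@[b]) \<le> length fs" for b by auto
  then have IH: "emeasure \<mu> (yy_cone fs vt x (\<sigma>@[b])) = emeasure \<mu> UNIV / 2^Suc (length \<sigma>)" for b
    using Suc(1) by simp
  have "emeasure \<mu> UNIV = ennreal (measure \<mu> UNIV)"
    using \<mu> unfolding meas_M_def by (simp add: finite_measure.emeasure_eq_measure)
  then show ?case
    using emeasure_yy_cone_split[OF \<mu>, of \<sigma> x] Suc(2,3) IH ennreal_halves[of "measure \<mu> UNIV" "length \<sigma>"]
    by simp
qed

definition peeled :: "'a \<Rightarrow> bool list \<Rightarrow> 'a \<Rightarrow> 'a" where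
  "peeled x \<sigma> z = peel_residual fs vt \<sigma> (length \<sigma>) (z - x)"

definition next_coord :: "'a \<Rightarrow> bool list \<Rightarrow> 'a \<Rightarrow> real" where
  "next_coord x \<sigma> z = (fs ! length \<sigma>) (peeled x \<sigma> z)"

lemma peel_coeff_eq_next_coord: "peel_coeff fs vt \<sigma> (length \<sigma>) (z - x) = next_coord x \<sigma> z / pivot \<sigma>"
  by (simp add: peel_coeff_def next_coord_def peeled_def)

lemma peeled_snoc: "peeled x (\<sigma>@[b]) z = peeled x \<sigma> z - (next_coord x \<sigma> z / pivot \<sigma>) *\<^sub>R vt \<sigma>"
  using peel_residual_snoc[of "length \<sigma>" \<sigma> fs vt b] by (simp add: peeled_def next_coord_def)

text \<open>The sign letter is corrected by the sign of the pivot, so that it prescribes the side of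
  \<open>next_coord\<close> rather than that of the coefficient.\<close>

lemma
  assumes "length \<sigma> < length fs"
  shows yy_cone_snoc_next_coord:
      "yy_cone fs vt x (\<sigma>@[e \<longleftrightarrow> 0 < pivot \<sigma>]) = yy_cone fs vt x \<sigma> \<inter> {z. on_side e (next_coord x \<sigma> z)}"
    and yy_open_cone_snoc_next_coord:
      "yy_open_cone fs vt x (\<sigma>@[e \<longleftrightarrow> 0 < pivot \<sigma>]) =
         yy_open_cone fs vt x \<sigma> \<inter> {z. strictly_on_side e (next_coord x \<sigma> z)}"
  using on_side_divide strictly_on_side_divide pivot_nonzero[OF assms]
  by (simp_all add: yy_cone_snoc yy_open_cone_snoc peel_coeff_eq_next_coord)

lemma continuous_next_coord:
  assumes "length \<sigma> < length fs"
  shows "continuous_on UNIV (next_coord x \<sigma>)"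
proof -
  have "next_coord x \<sigma> = (\<lambda>z. pivot \<sigma> * peel_coeff fs vt \<sigma> (length \<sigma>) (z - x))"
    using pivot_nonzero[OF assms] by (simp add: peel_coeff_eq_next_coord)
  then show ?thesis
    using continuous_peel_coeff[OF linear_forms assms] by (simp add: continuous_on_mult_left)
qed

lemma next_coord_add_kernel:
  assumes "length \<sigma> < length fs" "\<forall>j<length \<sigma>. (fs!j) h = 0"
  shows "next_coord x \<sigma> (z + h) = next_coord x \<sigma> z + (fs ! length \<sigma>) h"
proof -
  have e: "z + h - x = (z - x) + h" by (simp add: algebra_simps)
  have p: "peeled x \<sigma> (z + h) = peeled x \<sigma> z + h"
    unfolding peeled_def e using peel_residual_add_kernel[OF linear_forms _ assms(2)] assms(1) by simp
  have "linear (fs ! length \<sigma>)" using linear_forms assms(1) by simp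
  then show ?thesis unfolding next_coord_def p by (simp add: linear_add)
qed

lemma kernel_scaled_frame_vector:
  "length \<sigma> < length fs \<Longrightarrow> \<forall>j<length \<sigma>. (fs!j) (t *\<^sub>R vt \<sigma>) = 0"
  using linear_forms frame_vector_kernel by (simp add: linear_scale)

lemma next_coord_add_frame_vector:
  "length \<sigma> < length fs \<Longrightarrow> next_coord x \<sigma> (z + t *\<^sub>R vt \<sigma>) = next_coord x \<sigma> z + t * pivot \<sigma>"
  using next_coord_add_kernel[OF _ kernel_scaled_frame_vector] linear_forms by (simp add: linear_scale)

lemma yy_open_cone_add_frame_vector:
  "length \<sigma> < length fs \<Longrightarrow> z \<in> yy_open_cone fs vt x \<sigma> \<Longrightarrow> z + t *\<^sub>R vt \<sigma> \<in> yy_open_cone fs vt x \<sigma>"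
  using yy_open_cone_add_kernel[OF linear_forms _ kernel_scaled_frame_vector] by simp

lemma yy_open_cone_snoc_nonempty:
  assumes m: "length \<sigma> < length fs" and ne: "yy_open_cone fs vt x \<sigma> \<noteq> {}"
  shows "yy_open_cone fs vt x (\<sigma>@[e \<longleftrightarrow> 0 < pivot \<sigma>]) \<noteq> {}"
proof -
  obtain z1 where z1: "z1 \<in> yy_open_cone fs vt x \<sigma>" using ne by auto
  define t where "t = ((if e then 1 else -1) - next_coord x \<sigma> z1) / pivot \<sigma>"
  have "z1 + t *\<^sub>R vt \<sigma> \<in> yy_open_cone fs vt x \<sigma>" by (rule yy_open_cone_add_frame_vector[OF m z1])
  moreover have "next_coord x \<sigma> (z1 + t *\<^sub>R vt \<sigma>) = (if e then 1 else -1)"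
    unfolding next_coord_add_frame_vector[OF m] t_def using pivot_nonzero[OF m] by simp
  ultimately show ?thesis
    unfolding yy_open_cone_snoc_next_coord[OF m] by (auto simp: strictly_on_side_def)
qed

end

section \<open>Comparing two centers\<close>

lemma first_nonzero_side:
  fixes a :: "nat \<Rightarrow> real"
  assumes "m < k"
  obtains k' e where "m < k'" "k' \<le> k" "\<forall>i. m < i \<and> i < k' \<longrightarrow> a i = 0"
    "\<forall>t. on_side e t \<longrightarrow> 0 \<le> t * a k'" "k' < k \<Longrightarrow> \<forall>t. strictly_on_side e t \<longrightarrow> 0 < t * a k'"
proof (cases "\<exists>i. m < i \<and> i \<le> k \<and> a i \<noteq> 0")
  case True
  define i0 where "i0 = (LEAST i. m < i \<and> i \<le> k \<and> a i \<noteq> 0)"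
  have i0: "m < i0" "i0 \<le> k" "a i0 \<noteq> 0" unfolding i0_def using LeastI_ex[OF True] by auto
  have "a i = 0" if "m < i" "i < i0" for i
    using not_less_Least[of i "\<lambda>i. m < i \<and> i \<le> k \<and> a i \<noteq> 0"] that i0 unfolding i0_def by auto
  then show ?thesis using i0 that[of i0 "0 < a i0"]
    by (auto simp: on_side_def strictly_on_side_def zero_le_mult_iff zero_less_mult_iff)
next
  case False
  then show ?thesis using that[of k True] assms by (auto simp: on_side_def)
qed

locale two_frames = X: triangular fs vtx + Y: triangular fs vty
  for fs :: "('a::euclidean_space \<Rightarrow> real) list" and vtx vty +
  fixes x y :: 'a
begin

definition gap :: "bool list \<Rightarrow> bool list \<Rightarrow> 'a \<Rightarrow> 'a" where
  "gap \<sigma> \<tau> z = Y.peeled y \<tau> z - X.peeled x \<sigma> z"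

text \<open>The invariant of the simultaneous descent through both trees: the cones of \<open>x\<close> and \<open>y\<close>
  coincide and \<open>fs ! k\<close> is the first form that may separate the peeled points, which it
  does with a fixed sign.\<close>

definition matched :: "bool list \<Rightarrow> bool list \<Rightarrow> nat \<Rightarrow> bool" where
  "matched \<sigma> \<tau> k \<longleftrightarrow> length \<sigma> = length \<tau> \<and> length \<sigma> \<le> k \<and> k < length fs \<and>
     yy_cone fs vtx x \<sigma> = yy_cone fs vty y \<tau> \<and> yy_open_cone fs vtx x \<sigma> \<noteq> {} \<and>
     (\<forall>z\<in>yy_cone fs vtx x \<sigma>. (\<forall>i. length \<sigma> \<le> i \<and> i < k \<longrightarrow> (fs!i) (gap \<sigma> \<tau> z) = 0) \<and>
        0 \<le> (fs!k) (gap \<sigma> \<tau> z)) \<and>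
     (\<forall>z\<in>yy_open_cone fs vtx x \<sigma>. 0 < (fs!k) (gap \<sigma> \<tau> z))"

definition strictly_nested :: "bool list \<Rightarrow> bool list \<Rightarrow> bool" where
  "strictly_nested \<sigma> \<tau> \<longleftrightarrow> length \<sigma> = length \<tau> \<and> yy_cone fs vtx x \<sigma> \<subseteq> yy_cone fs vty y \<tau> \<and>
     (\<exists>U. open U \<and> U \<noteq> {} \<and> U \<subseteq> yy_cone fs vty y \<tau> - yy_cone fs vtx x \<sigma>)"

lemma matched_root:
  assumes "k < length fs" "\<forall>i<k. (fs!i) (x - y) = 0" "0 < (fs!k) (x - y)"
  shows "matched [] [] k"
  using assms by (simp add: matched_def gap_def X.peeled_def Y.peeled_def)

lemma gap_snoc: "gap (\<sigma>@[b]) (\<tau>@[b']) z = gap \<sigma> \<tau> z +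
    (X.next_coord x \<sigma> z / X.pivot \<sigma>) *\<^sub>R vtx \<sigma> - (Y.next_coord y \<tau> z / Y.pivot \<tau>) *\<^sub>R vty \<tau>"
  by (simp add: gap_def X.peeled_snoc Y.peeled_snoc algebra_simps)

lemma
  assumes "length \<tau> = length \<sigma>" "length \<sigma> < length fs"
  shows next_coord_gap: "Y.next_coord y \<tau> z = X.next_coord x \<sigma> z + (fs ! length \<sigma>) (gap \<sigma> \<tau> z)"
    and next_coord_add_other_frame_vector:
      "Y.next_coord y \<tau> (z + t *\<^sub>R vtx \<sigma>) = Y.next_coord y \<tau> z + t * X.pivot \<sigma>"
proof -
  have "linear (fs ! length \<sigma>)" using X.linear_forms assms(2) by simp
  then show "Y.next_coord y \<tau> z = X.next_coord x \<sigma> z + (fs ! length \<sigma>) (gap \<sigma> \<tau> z)"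
    and "Y.next_coord y \<tau> (z + t *\<^sub>R vtx \<sigma>) = Y.next_coord y \<tau> z + t * X.pivot \<sigma>"
    using Y.next_coord_add_kernel[of \<tau> "t *\<^sub>R vtx \<sigma>"] X.kernel_scaled_frame_vector[of \<sigma> t] assms
    by (simp_all add: gap_def X.next_coord_def Y.next_coord_def linear_diff linear_scale)
qed

lemma matched_last_level:
  assumes "matched \<sigma> \<tau> k" "length \<sigma> = k"
  shows "strictly_nested (\<sigma>@[0 < X.pivot \<sigma>]) (\<tau>@[0 < Y.pivot \<tau>])"
proof -
  let ?gx = "X.next_coord x \<sigma>" and ?gy = "Y.next_coord y \<tau>" and ?a = "X.pivot \<sigma>"
  have len: "length \<tau> = length \<sigma>" "length \<sigma> < length fs"
    and D: "yy_cone fs vtx x \<sigma> = yy_cone fs vty y \<tau>" and ne: "yy_open_cone fs vtx x \<sigma> \<noteq> {}"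
    and ge: "\<forall>z\<in>yy_cone fs vtx x \<sigma>. 0 \<le> (fs!k) (gap \<sigma> \<tau> z)"
    and gt: "\<forall>z\<in>yy_open_cone fs vtx x \<sigma>. 0 < (fs!k) (gap \<sigma> \<tau> z)"
    using assms unfolding matched_def by auto
  have gy: "?gy z = ?gx z + (fs!k) (gap \<sigma> \<tau> z)" for z using next_coord_gap[OF len] assms(2) by simp
  have a: "?a \<noteq> 0" using X.pivot_nonzero[OF len(2)] .
  have cx: "yy_cone fs vtx x (\<sigma>@[0 < ?a]) = yy_cone fs vtx x \<sigma> \<inter> {z. 0 \<le> ?gx z}"
    using X.yy_cone_snoc_next_coord[OF len(2), where e = True and x = x] by (simp add: on_side_def)
  have cy: "yy_cone fs vty y (\<tau>@[0 < Y.pivot \<tau>]) = yy_cone fs vtx x \<sigma> \<inter> {z. 0 \<le> ?gy z}"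
    using Y.yy_cone_snoc_next_coord[of \<tau>, where e = True and x = y] len D by (simp add: on_side_def)
  define U where "U = yy_open_cone fs vtx x \<sigma> \<inter> {z. ?gx z < 0} \<inter> {z. 0 < ?gy z}"
  have "open U" unfolding U_def
    using open_yy_open_cone[OF X.linear_forms, of \<sigma>] len
      open_Collect_less[OF X.continuous_next_coord[OF len(2), of x] continuous_on_const]
      open_Collect_less[OF continuous_on_const Y.continuous_next_coord[of \<tau> y]]
    by (intro open_Int) auto
  obtain z1 where z1: "z1 \<in> yy_open_cone fs vtx x \<sigma>" using ne by auto
  \<comment> \<open>Along \<open>vtx \<sigma>\<close> both next coordinates grow at the rate \<open>?a\<close>: where \<open>?gx\<close> vanishes the gap makes
    \<open>?gy\<close> positive, and stepping back by half of \<open>?gy\<close> separates the two signs.\<close>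
  define t0 where "t0 = - (?gx z1 / ?a)"
  define z0 where "z0 = z1 + t0 *\<^sub>R vtx \<sigma>"
  have z0: "z0 \<in> yy_open_cone fs vtx x \<sigma>"
    unfolding z0_def by (rule X.yy_open_cone_add_frame_vector[OF len(2) z1])
  have "?gx z0 = 0"
    unfolding z0_def X.next_coord_add_frame_vector[OF len(2)] t0_def using a by simp
  then have pos: "0 < ?gy z0" using gy gt z0 by simp
  define t2 where "t2 = - (?gy z0 / (2 * ?a))"
  define z2 where "z2 = z0 + t2 *\<^sub>R vtx \<sigma>"
  have "z2 \<in> yy_open_cone fs vtx x \<sigma>"
    unfolding z2_def by (rule X.yy_open_cone_add_frame_vector[OF len(2) z0])
  moreover have "?gx z2 = - ?gy z0 / 2"
    unfolding z2_def X.next_coord_add_frame_vector[OF len(2)] t2_def \<open>?gx z0 = 0\<close> using a by simp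
  moreover have "?gy z2 = ?gy z0 / 2"
    unfolding z2_def next_coord_add_other_frame_vector[OF len] t2_def using a by simp
  ultimately have "z2 \<in> U" unfolding U_def using pos by simp
  moreover have "U \<subseteq> yy_cone fs vty y (\<tau>@[0 < Y.pivot \<tau>]) - yy_cone fs vtx x (\<sigma>@[0 < ?a])"
    unfolding U_def cx cy using yy_open_cone_subset by fastforce
  moreover have "yy_cone fs vtx x (\<sigma>@[0 < ?a]) \<subseteq> yy_cone fs vty y (\<tau>@[0 < Y.pivot \<tau>])"
    unfolding cx cy using gy ge by fastforce
  ultimately show ?thesis unfolding strictly_nested_def using len \<open>open U\<close> by auto
qed

definition frame_shift :: "bool list \<Rightarrow> bool list \<Rightarrow> 'a" where
  "frame_shift \<sigma> \<tau> = (1 / X.pivot \<sigma>) *\<^sub>R vtx \<sigma> - (1 / Y.pivot \<tau>) *\<^sub>R vty \<tau>"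

lemma matched_next_coord_eq:
  assumes "matched \<sigma> \<tau> k" "length \<sigma> < k" "z \<in> yy_cone fs vtx x \<sigma>"
  shows "Y.next_coord y \<tau> z = X.next_coord x \<sigma> z"
  using assms next_coord_gap[of \<tau> \<sigma>, where z = z] unfolding matched_def by auto

text \<open>Before the separating form is reached, the next coordinates of the two peeled points
  agree on the common cone, so one more peeling step moves the gap along \<open>frame_shift\<close>.\<close>

lemma matched_gap_snoc:
  assumes "matched \<sigma> \<tau> k" "length \<sigma> < k" "z \<in> yy_cone fs vtx x \<sigma>" "i < length fs"
  shows "(fs!i) (gap (\<sigma>@[b]) (\<tau>@[b']) z) = (fs!i) (gap \<sigma> \<tau> z) + X.next_coord x \<sigma> z * (fs!i) (frame_shift \<sigma> \<tau>)"
proof -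
  have "gap (\<sigma>@[b]) (\<tau>@[b']) z = gap \<sigma> \<tau> z + X.next_coord x \<sigma> z *\<^sub>R frame_shift \<sigma> \<tau>"
    unfolding gap_snoc matched_next_coord_eq[OF assms(1-3)] frame_shift_def by (simp add: algebra_simps)
  moreover have "linear (fs!i)" using X.linear_forms assms(4) by simp
  ultimately show ?thesis by (simp add: linear_add linear_scale)
qed

lemma matched_yy_cone_snoc:
  assumes "matched \<sigma> \<tau> k" "length \<sigma> < k"
  shows "yy_cone fs vty y (\<tau>@[e \<longleftrightarrow> 0 < Y.pivot \<tau>]) = yy_cone fs vtx x (\<sigma>@[e \<longleftrightarrow> 0 < X.pivot \<sigma>])"
proof -
  have len: "length \<tau> = length \<sigma>" "length \<sigma> < length fs" and D: "yy_cone fs vty y \<tau> = yy_cone fs vtx x \<sigma>"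
    using assms unfolding matched_def by auto
  show ?thesis
    unfolding X.yy_cone_snoc_next_coord[OF len(2)] Y.yy_cone_snoc_next_coord[OF len(2)[folded len(1)]] D
    using matched_next_coord_eq[OF assms] by auto
qed

lemma matched_descend:
  assumes "matched \<sigma> \<tau> k" "length \<sigma> < k"
  obtains e k' where "k' \<le> k" "matched (\<sigma>@[e \<longleftrightarrow> 0 < X.pivot \<sigma>]) (\<tau>@[e \<longleftrightarrow> 0 < Y.pivot \<tau>]) k'"
proof -
  let ?m = "length \<sigma>" and ?gx = "X.next_coord x \<sigma>" and ?D = "yy_cone fs vtx x \<sigma>"
    and ?\<delta> = "frame_shift \<sigma> \<tau>"
  have len: "length \<tau> = ?m" "?m < length fs" "k < length fs"
    and ne: "yy_open_cone fs vtx x \<sigma> \<noteq> {}"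
    and zero: "\<And>z i. z \<in> ?D \<Longrightarrow> ?m \<le> i \<Longrightarrow> i < k \<Longrightarrow> (fs!i) (gap \<sigma> \<tau> z) = 0"
    and ge: "\<And>z. z \<in> ?D \<Longrightarrow> 0 \<le> (fs!k) (gap \<sigma> \<tau> z)"
    and gt: "\<And>z. z \<in> yy_open_cone fs vtx x \<sigma> \<Longrightarrow> 0 < (fs!k) (gap \<sigma> \<tau> z)"
    using assms unfolding matched_def by auto
  obtain k' e where k': "?m < k'" "k' \<le> k" and skip: "\<forall>i. ?m < i \<and> i < k' \<longrightarrow> (fs!i) ?\<delta> = 0"
    and side: "\<forall>t. on_side e t \<longrightarrow> 0 \<le> t * (fs!k') ?\<delta>"
    and strict: "k' < k \<Longrightarrow> \<forall>t. strictly_on_side e t \<longrightarrow> 0 < t * (fs!k') ?\<delta>"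
    by (rule first_nonzero_side[OF assms(2), of "\<lambda>i. (fs!i) ?\<delta>"]) blast
  define \<sigma>' where "\<sigma>' = \<sigma>@[e \<longleftrightarrow> 0 < X.pivot \<sigma>]"
  define \<tau>' where "\<tau>' = \<tau>@[e \<longleftrightarrow> 0 < Y.pivot \<tau>]"
  have cx: "yy_cone fs vtx x \<sigma>' = ?D \<inter> {z. on_side e (?gx z)}"
    unfolding \<sigma>'_def by (rule X.yy_cone_snoc_next_coord[OF len(2)])
  have ox: "yy_open_cone fs vtx x \<sigma>' = yy_open_cone fs vtx x \<sigma> \<inter> {z. strictly_on_side e (?gx z)}"
    unfolding \<sigma>'_def by (rule X.yy_open_cone_snoc_next_coord[OF len(2)])
  have gap': "(fs!i) (gap \<sigma>' \<tau>' z) = (fs!i) (gap \<sigma> \<tau> z) + ?gx z * (fs!i) ?\<delta>"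
    if "z \<in> ?D" "i < length fs" for z i
    unfolding \<sigma>'_def \<tau>'_def using matched_gap_snoc[OF assms that] .
  have "(fs!i) (gap \<sigma>' \<tau>' z) = 0" if "z \<in> yy_cone fs vtx x \<sigma>'" "Suc ?m \<le> i" "i < k'" for z i
    using that gap'[of z i] zero[of z i] skip k' len(3) unfolding cx by auto
  moreover have "0 \<le> (fs!k') (gap \<sigma>' \<tau>' z)" if "z \<in> yy_cone fs vtx x \<sigma>'" for z
  proof -
    have "z \<in> ?D" "0 \<le> ?gx z * (fs!k') ?\<delta>" using that side unfolding cx by auto
    moreover have "0 \<le> (fs!k') (gap \<sigma> \<tau> z)"
      using zero[of z k'] ge[of z] k' \<open>z \<in> ?D\<close> by (cases "k' < k") auto
    ultimately show ?thesis using gap'[of z k'] k' len(3) by simp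
  qed
  moreover have "0 < (fs!k') (gap \<sigma>' \<tau>' z)" if "z \<in> yy_open_cone fs vtx x \<sigma>'" for z
  proof -
    have z: "z \<in> yy_open_cone fs vtx x \<sigma>" "strictly_on_side e (?gx z)" using that unfolding ox by auto
    then have "z \<in> ?D" using yy_open_cone_subset by blast
    have "0 < (fs!k') (gap \<sigma> \<tau> z) + ?gx z * (fs!k') ?\<delta>"
      using zero[OF \<open>z \<in> ?D\<close>, of k'] strict gt[OF z(1)] side strictly_on_side_imp_on_side[OF z(2)] z(2) k'
      by (cases "k' < k") (auto intro: add_pos_nonneg)
    then show ?thesis using gap'[OF \<open>z \<in> ?D\<close>, of k'] k' len(3) by simp
  qed
  moreover have "yy_open_cone fs vtx x \<sigma>' \<noteq> {}"
    unfolding \<sigma>'_def by (rule X.yy_open_cone_snoc_nonempty[OF len(2) ne])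
  ultimately have "matched \<sigma>' \<tau>' k'"
    unfolding matched_def using matched_yy_cone_snoc[OF assms] len k'
    by (simp add: \<sigma>'_def \<tau>'_def)
  then show ?thesis using that k'(2) unfolding \<sigma>'_def \<tau>'_def by blast
qed

lemma matched_imp_strictly_nested:
  "matched \<sigma> \<tau> k \<Longrightarrow> \<exists>\<sigma>' \<tau>'. length \<sigma>' \<le> Suc k \<and> strictly_nested \<sigma>' \<tau>'"
proof (induction "k - length \<sigma>" arbitrary: \<sigma> \<tau> k rule: less_induct)
  case less
  show ?case
  proof (cases "length \<sigma> = k")
    case True
    then have "length (\<sigma>@[0 < X.pivot \<sigma>]) \<le> Suc k" by simp
    then show ?thesis using matched_last_level[OF less.prems True] by blast
  next
    case False
    then have "length \<sigma> < k" using less.prems by (simp add: matched_def)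
    then obtain e k' where "k' \<le> k"
      and m: "matched (\<sigma>@[e \<longleftrightarrow> 0 < X.pivot \<sigma>]) (\<tau>@[e \<longleftrightarrow> 0 < Y.pivot \<tau>]) k'"
      using matched_descend[OF less.prems] by blast
    have "length (\<sigma>@[e \<longleftrightarrow> 0 < X.pivot \<sigma>]) \<le> k'" using m unfolding matched_def by blast
    then have "k' - length (\<sigma>@[e \<longleftrightarrow> 0 < X.pivot \<sigma>]) < k - length \<sigma>"
      using \<open>k' \<le> k\<close> \<open>length \<sigma> < k\<close> by simp
    then obtain \<sigma>' \<tau>' where "length \<sigma>' \<le> Suc k'" "strictly_nested \<sigma>' \<tau>'"
      using less.hyps[OF _ m] by blast
    then show ?thesis using \<open>k' \<le> k\<close> by (intro exI[of _ \<sigma>'] exI[of _ \<tau>']) simp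
  qed
qed

end

lemma emeasure_less_of_open_gap:
  assumes \<mu>: "\<mu> \<in> meas_Mstar" and AB: "A \<in> sets borel" "B \<in> sets borel" "A \<subseteq> B"
    and U: "open U" "U \<noteq> {}" "U \<subseteq> B - A"
  shows "emeasure \<mu> A < emeasure \<mu> B"
proof -
  have sets: "sets \<mu> = sets borel" and fin: "finite_measure \<mu>" and pos: "0 < emeasure \<mu> U"
    using \<mu> U unfolding meas_Mstar_def meas_M_def by auto
  have "emeasure \<mu> A + emeasure \<mu> U = emeasure \<mu> (A \<union> U)"
    using U AB sets by (intro plus_emeasure) auto
  also have "\<dots> \<le> emeasure \<mu> B" using U AB sets by (intro emeasure_mono) auto
  finally have le: "emeasure \<mu> A + emeasure \<mu> U \<le> emeasure \<mu> B" .
  have "emeasure \<mu> A \<noteq> \<infinity>" using fin by (simp add: finite_measure.emeasure_finite)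
  then have "emeasure \<mu> A < emeasure \<mu> A + emeasure \<mu> U" using pos
    by (metis add.right_neutral ennreal_add_left_cancel_less)
  then show ?thesis using le by order
qed

lemma yy_center_imp_triangular:
  fixes L :: "('a::euclidean_space \<Rightarrow> real) list"
  assumes aff: "\<forall>l\<in>set L. affine_form l" and len: "length L = DIM('a)"
    and \<mu>: "\<mu> \<in> meas_M" and center: "yy_center \<mu> L x"
  obtains vt where "triangular (map linear_part L) vt"
    "\<forall>\<sigma>. length \<sigma> \<le> length L \<longrightarrow>
       emeasure \<mu> (yy_cone (map linear_part L) vt x \<sigma>) = emeasure \<mu> UNIV / 2^length \<sigma>"
proof -
  obtain P where P: "yy_adapted UNIV L P x" "yy_equipartition \<mu> P"
    using center unfolding yy_center_def by blast
  obtain vt where vt: "P = (\<lambda>\<sigma>. UNIV \<inter> yy_cone (map linear_part L) vt x \<sigma>) ` {\<sigma>. length \<sigma> = length L}"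
    "triangular_frame (map linear_part L) vt"
    using yy_adapted_imp_yy_cones[OF P(1), of "[]"] aff by auto
  have tri: "triangular (map linear_part L) vt"
    using vt(2) aff linear_linear_part unfolding triangular_def by auto
  have "emeasure \<mu> (yy_cone (map linear_part L) vt x \<sigma>) = emeasure \<mu> UNIV / 2^length (map linear_part L)"
    if "length \<sigma> = length (map linear_part L)" for \<sigma>
    using P(2) vt(1) that len unfolding yy_equipartition_def by auto
  then show ?thesis using that tri triangular.emeasure_yy_cone[OF tri \<mu>] by simp
qed

lemma yy_center_coord_not_less:
  fixes L :: "('a::euclidean_space \<Rightarrow> real) list"
  assumes aff: "\<forall>l\<in>set L. affine_form l" and len: "length L = DIM('a)" and k: "k \<le> length L"
    and \<mu>: "\<mu> \<in> meas_Mstar" and \<nu>: "\<nu> \<in> meas_M"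
    and agree: "\<forall>A\<in>coord_sigma L k. emeasure \<mu> A = emeasure \<nu> A"
    and x: "yy_center \<mu> L x" and y: "yy_center \<nu> L y"
    and j: "j < k" "\<forall>i<j. (L!i) x = (L!i) y"
  shows "\<not> (L!j) y < (L!j) x"
proof
  assume lt: "(L!j) y < (L!j) x"
  let ?fs = "map linear_part L"
  obtain vtx where tx: "triangular ?fs vtx"
    and mx: "\<forall>\<sigma>. length \<sigma> \<le> length L \<longrightarrow> emeasure \<mu> (yy_cone ?fs vtx x \<sigma>) = emeasure \<mu> UNIV / 2^length \<sigma>"
    using yy_center_imp_triangular[OF aff len _ x] \<mu> unfolding meas_Mstar_def by blast
  obtain vty where ty: "triangular ?fs vty"
    and my: "\<forall>\<tau>. length \<tau> \<le> length L \<longrightarrow> emeasure \<nu> (yy_cone ?fs vty y \<tau>) = emeasure \<nu> UNIV / 2^length \<tau>"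
    using yy_center_imp_triangular[OF aff len \<nu> y] by blast
  interpret two_frames ?fs vtx vty x y using tx ty by (simp add: two_frames_def)
  have "(?fs!i) (x - y) = (L!i) x - (L!i) y" if "i < length L" for i
    using affine_form_diff[of "L!i" x y] aff that by simp
  then have "matched [] [] j" using j k lt by (intro matched_root) auto
  then obtain \<sigma> \<tau> where \<sigma>: "length \<sigma> \<le> Suc j" and nested: "strictly_nested \<sigma> \<tau>"
    using matched_imp_strictly_nested by blast
  then have lens: "length \<tau> = length \<sigma>" "length \<sigma> \<le> k" using j by (auto simp: strictly_nested_def)
  have "UNIV \<in> coord_sigma L k" unfolding coord_sigma_def by (rule sigma_sets_top)
  then have UNIV: "emeasure \<mu> UNIV = emeasure \<nu> UNIV" using agree by simp
  have "yy_cone ?fs vtx x \<sigma> \<in> sets borel" "yy_cone ?fs vty y \<tau> \<in> sets borel"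
    using closed_yy_cone[OF X.linear_forms] lens k by auto
  then have "emeasure \<mu> (yy_cone ?fs vtx x \<sigma>) < emeasure \<mu> (yy_cone ?fs vty y \<tau>)"
    using nested emeasure_less_of_open_gap[OF \<mu>] unfolding strictly_nested_def by blast
  also have "\<dots> = emeasure \<nu> (yy_cone ?fs vty y \<tau>)"
    using agree yy_cone_in_coord_sigma[OF aff _ k] lens by simp
  also have "\<dots> = emeasure \<mu> (yy_cone ?fs vtx x \<sigma>)"
    using mx my lens k UNIV by simp
  finally show False by simp
qed

lemma yy_centers_coords_eq:
  fixes L :: "('a::euclidean_space \<Rightarrow> real) list"
  assumes aff: "\<forall>l\<in>set L. affine_form l" and len: "length L = DIM('a)" and k: "k \<le> length L"
    and \<mu>: "\<mu> \<in> meas_Mstar" and \<nu>: "\<nu> \<in> meas_Mstar"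
    and agree: "\<forall>A\<in>coord_sigma L k. emeasure \<mu> A = emeasure \<nu> A"
    and x: "yy_center \<mu> L x" and y: "yy_center \<nu> L y"
  shows "\<forall>i<k. (L!i) x = (L!i) y"
proof (rule ccontr)
  assume "\<not> (\<forall>i<k. (L!i) x = (L!i) y)"
  then obtain j where j: "j < k" "(L!j) x \<noteq> (L!j) y"
    and "\<forall>i<j. \<not> (i < k \<and> (L!i) x \<noteq> (L!i) y)"
    using exists_least_iff[of "\<lambda>i. i < k \<and> (L!i) x \<noteq> (L!i) y"] by blast
  then have below: "\<forall>i<j. (L!i) x = (L!i) y" by auto
  have "\<mu> \<in> meas_M" "\<nu> \<in> meas_M" using \<mu> \<nu> unfolding meas_Mstar_def by auto
  have "\<not> (L!j) y < (L!j) x"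
    by (rule yy_center_coord_not_less[OF aff len k \<mu> \<open>\<nu> \<in> meas_M\<close> agree x y j(1) below])
  moreover have "\<forall>A\<in>coord_sigma L k. emeasure \<nu> A = emeasure \<mu> A" "\<forall>i<j. (L!i) y = (L!i) x"
    using agree below by simp_all
  then have "\<not> (L!j) x < (L!j) y"
    by (intro yy_center_coord_not_less[OF aff len k \<nu> \<open>\<mu> \<in> meas_M\<close> _ y x j(1)])
  ultimately show False using j(2) by simp
qed

theorem proposition10:
  fixes L :: "('a::euclidean_space \<Rightarrow> real) list"
  assumes "coord_system L"
  shows "(\<forall>\<mu> x y. \<mu> \<in> meas_Mstar \<and> yy_center \<mu> L x \<and> yy_center \<mu> L y \<longrightarrow> x = y) \<and>
         (\<forall>k \<mu> \<nu> x y. 1 \<le> k \<and> k \<le> DIM('a) \<and> \<mu> \<in> meas_Mstar \<and> \<nu> \<in> meas_Mstar \<and>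
            (\<forall>A\<in>coord_sigma L k. emeasure \<mu> A = emeasure \<nu> A) \<and>
            yy_center \<mu> L x \<and> yy_center \<nu> L y
            \<longrightarrow> (\<forall>i<k. (L ! i) x = (L ! i) y))"
proof -
  have len: "length L = DIM('a)" and aff: "\<forall>l\<in>set L. affine_form l"
    and inj: "inj (\<lambda>z. map (\<lambda>l. l z) L)"
    using assms unfolding coord_system_def bij_betw_def by auto
  show ?thesis
  proof (intro conjI allI impI)
    fix \<mu> x y assume "\<mu> \<in> meas_Mstar \<and> yy_center \<mu> L x \<and> yy_center \<mu> L y"
    then have "\<forall>i<length L. (L!i) x = (L!i) y" using yy_centers_coords_eq[OF aff len order_refl] by blast
    then have "map (\<lambda>l. l x) L = map (\<lambda>l. l y) L" by (simp add: list_eq_iff_nth_eq)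
    then show "x = y" by (rule injD[OF inj])
  next
    fix k \<mu> \<nu> x y i
    assume "1 \<le> k \<and> k \<le> DIM('a) \<and> \<mu> \<in> meas_Mstar \<and> \<nu> \<in> meas_Mstar \<and>
      (\<forall>A\<in>coord_sigma L k. emeasure \<mu> A = emeasure \<nu> A) \<and> yy_center \<mu> L x \<and> yy_center \<nu> L y"
      and "i < k"
    then show "(L!i) x = (L!i) y"
      using yy_centers_coords_eq[OF aff len, of k \<mu> \<nu> x y] len by simp
  qed
qed

end
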